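(* Let $\mathcal{R}$ be a finite valuation ring with residue field of cardinality $q$ and with uniformizer of nilpotency degree $r$ (so $|\mathcal{R}|=q^r$). Let $\mathcal{R}^0$ denote the set of non-units of $\mathcal{R}$. Then there is a constant $c>0$ depending only on $r$ such that for every set $A\subset\mathcal{R}$ with $A\cap\mathcal{R}^0=\emptyset$ and $A\cap(\mathcal{R}^0-1)=\emptyset$ (i.e. every $a\in A$ satisfies that $a$ and $a+1$ are units), \[|A(A+1)|\ \ge\ c\min\left\{\sqrt{q^r|A|},\ \frac{|A|^2}{\sqrt{q^{2r-1}}}\right\},\] where $A(A+1)=\{a(b+1):a,b\in A\}$.
   Context: A finite valuation ring is a finite commutative ring with identity that is local (has a unique maximal ideal) and principal (every ideal is principal); its maximal ideal is generated by a non-unit $z$ (a uniformizer), the residue field $\mathcal{R}/(z)$ has $q$ elements, and $r$ is the least integer with $z^r=0$. $\mathcal{R}^0-1=\{t-1:t\in\mathcal{R}^0\}$. *)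

theory Defs
  imports "HOL-Algebra.Algebra" "HOL-Analysis.Analysis"
begin

definition finite_valuation_ring :: "('a, 'b) ring_scheme \<Rightarrow> bool" where
  "finite_valuation_ring R \<longleftrightarrow>
     cring R \<and> finite (carrier R) \<and> (\<exists>!I. maximalideal I R) \<and>
     (\<forall>I. ideal I R \<longrightarrow> principalideal I R)"

definition nonunits :: "('a, 'b) ring_scheme \<Rightarrow> 'a set" where
  "nonunits R = carrier R - Units R"

definition prod_shift_set :: "('a, 'b) ring_scheme \<Rightarrow> 'a set \<Rightarrow> 'a set" where
  "prod_shift_set R A = {a \<otimes>\<^bsub>R\<^esub> (b \<oplus>\<^bsub>R\<^esub> \<one>\<^bsub>R\<^esub>) | a b. a \<in> A \<and> b \<in> A}"

end

theory Submission
  imports Defs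
begin

text \<open>
  Write \<open>S = A(A+1)\<close> and consider the points \<open>S \<times> S\<close> and the \<open>|A|\<^sup>2\<close> lines
  \<open>y = c (b+1)\<^sup>-\<^sup>1 x + c\<close> with \<open>b, c \<in> A\<close>: the line indexed by \<open>(b, c)\<close>
  passes through the \<open>|A|\<close> points \<open>(a(b+1), c(a+1))\<close>, so there are at least
  \<open>|A|\<^sup>3\<close> incidences. For arbitrary points \<open>P\<close> and lines \<open>L\<close> over a finite ring,
  a second moment argument bounds the number of incidences by
  \<open>|P||L|/|R| + sqrt(|P||L||R\<^sup>0||R|)\<close>: two points lie on at most one common line
  unless their abscissae differ by a non-unit. In a finite valuation ring
  \<open>|R| = q\<^sup>r\<close> and \<open>|R\<^sup>0| = q\<^sup>r\<^sup>-\<^sup>1\<close>, and comparing the two bounds gives the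
  claim with \<open>c = 1/2\<close>.
\<close>

lemma min_sqrt_le_of_cube_le:
  fixes Y s N T :: real
  assumes "Y \<ge> 0" "s \<ge> 0" "N > 0" "T \<ge> 0"
    and cube: "Y ^ 3 \<le> s\<^sup>2 * Y\<^sup>2 / N + Y * s * T"
  shows "1/2 * min (sqrt (N * Y)) (Y\<^sup>2 / T) \<le> s"
proof (cases "Y = 0")
  case True
  then show ?thesis using \<open>s \<ge> 0\<close> by simp
next
  case False
  then have "Y > 0" using \<open>Y \<ge> 0\<close> by simp
  have "s\<^sup>2 * Y\<^sup>2 / N + Y * s * T = Y\<^sup>2 * (s\<^sup>2 / N + s * T / Y)"
    using \<open>Y > 0\<close> by (simp add: field_simps power2_eq_square)
  then have "Y\<^sup>2 * Y \<le> Y\<^sup>2 * (s\<^sup>2 / N + s * T / Y)"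
    using cube by (simp add: power2_eq_square power3_eq_cube)
  then have split: "Y \<le> s\<^sup>2 / N + s * T / Y"
    using \<open>Y > 0\<close> by simp
  show ?thesis
  proof (cases "s\<^sup>2 / N \<ge> Y / 2")
    case True
    then have "N * Y \<le> 2 * s\<^sup>2"
      using \<open>N > 0\<close> by (simp add: field_simps)
    also have "\<dots> \<le> (2 * s)\<^sup>2"
      by (simp add: power_mult_distrib)
    finally have "sqrt (N * Y) \<le> 2 * s"
      using \<open>s \<ge> 0\<close> by (intro real_le_lsqrt) simp_all
    then show ?thesis by linarith
  next
    case False
    then have "Y / 2 \<le> s * T / Y"
      using split by linarith
    then have "Y\<^sup>2 / 2 \<le> s * T"
      using \<open>Y > 0\<close> by (simp add: field_simps power2_eq_square)
    moreover from calculation have "T > 0"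
      using \<open>Y > 0\<close> \<open>T \<ge> 0\<close> by (cases "T = 0") auto
    ultimately have "Y\<^sup>2 / T \<le> 2 * s"
      by (simp add: field_simps)
    then show ?thesis by linarith
  qed
qed

context cring
begin

lemma nonunit_in_maximalideal:
  assumes fin: "finite (carrier R)" and x: "x \<in> carrier R" "x \<notin> Units R"
  obtains I where "maximalideal I R" "x \<in> I"
proof -
  define F where "F = {J. ideal J R \<and> x \<in> J \<and> \<one> \<notin> J}"
  have "\<one> \<notin> PIdl x"
  proof
    assume "\<one> \<in> PIdl x"
    then obtain y where "y \<in> carrier R" "\<one> = y \<otimes> x"
      unfolding cgenideal_def by auto
    then have "x \<in> Units R"
      using x unfolding Units_def by (auto simp: m_comm)
    with x show False by simp
  qed
  then have "PIdl x \<in> F"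
    unfolding F_def using cgenideal_ideal cgenideal_self x by auto
  have "F \<subseteq> Pow (carrier R)"
    unfolding F_def using ideal.Icarr by fastforce
  then have "finite F"
    using fin by (meson finite_Pow_iff finite_subset)
  \<comment> \<open>an ideal of largest cardinality among the proper ideals containing \<open>x\<close> is maximal\<close>
  have "Max (card ` F) \<in> card ` F"
    using \<open>finite F\<close> \<open>PIdl x \<in> F\<close> by (intro Max_in) auto
  then obtain J where J: "J \<in> F" "card J = Max (card ` F)"
    by auto
  have J_largest: "card J' \<le> card J" if "J' \<in> F" for J'
    unfolding J(2) using \<open>finite F\<close> that by (intro Max_ge) auto
  have "maximalideal J R"
  proof (rule maximalidealI)
    show "ideal J R" "carrier R \<noteq> J"
      using J unfolding F_def by auto
    fix J' assume J': "ideal J' R" "J \<subseteq> J'" "J' \<subseteq> carrier R"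
    show "J' = J \<or> J' = carrier R"
    proof (cases "\<one> \<in> J'")
      case True
      then show ?thesis using ideal.one_imp_carrier[OF J'(1)] by auto
    next
      case False
      then have "card J' \<le> card J"
        using J J' by (intro J_largest) (auto simp: F_def)
      moreover have "finite J'"
        using J'(3) fin finite_subset by auto
      ultimately show ?thesis
        using J'(2) card_seteq by blast
    qed
  qed
  with J show thesis
    using that unfolding F_def by auto
qed

lemma nonunits_eq_maximalideal:
  assumes fin: "finite (carrier R)" and M: "maximalideal M R"
    and unique: "\<And>I. maximalideal I R \<Longrightarrow> I = M"
  shows "nonunits R = M"
proof
  show "nonunits R \<subseteq> M"
  proof
    fix x assume "x \<in> nonunits R"
    then obtain I where "maximalideal I R" "x \<in> I"
      using nonunit_in_maximalideal[OF fin] unfolding nonunits_def by blast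
    then show "x \<in> M"
      using unique by simp
  qed
  show "M \<subseteq> nonunits R"
  proof
    fix x assume "x \<in> M"
    have "x \<notin> Units R"
    proof
      assume "x \<in> Units R"
      then have "\<one> \<in> M"
        using ideal.I_l_closed[OF maximalideal.axioms(1)[OF M] \<open>x \<in> M\<close>]
        by (metis Units_inv_closed Units_l_inv)
      then have "M = carrier R"
        using M by (simp add: ideal.one_imp_carrier maximalideal.axioms(1))
      then show False
        using maximalideal.I_notcarr[OF M] by simp
    qed
    moreover have "x \<in> carrier R"
      using ideal.Icarr[OF maximalideal.axioms(1)[OF M] \<open>x \<in> M\<close>] .
    ultimately show "x \<in> nonunits R"
      unfolding nonunits_def by simp
  qed
qed

lemma card_eq_card_mult_image_mult_card_ann:
  assumes fin: "finite (carrier R)" and a: "a \<in> carrier R" and D: "D \<subseteq> carrier R"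
    and D_add: "\<And>x y. x \<in> D \<Longrightarrow> y \<in> D \<Longrightarrow> x \<oplus> y \<in> D"
    and ann_D: "{x \<in> carrier R. a \<otimes> x = \<zero>} \<subseteq> D"
  shows "card D = card ((\<lambda>x. a \<otimes> x) ` D) * card {x \<in> carrier R. a \<otimes> x = \<zero>}"
proof -
  define K where "K = {x \<in> carrier R. a \<otimes> x = \<zero>}"
  have "finite D"
    using D fin finite_subset by auto
  have D_fibres: "D = (\<Union>y\<in>(\<lambda>x. a \<otimes> x) ` D. {x\<in>D. a \<otimes> x = y})"
    by auto
  have "card D = (\<Sum>y\<in>(\<lambda>x. a \<otimes> x) ` D. card {x\<in>D. a \<otimes> x = y})"
    by (subst D_fibres, rule card_UN_disjoint) (use \<open>finite D\<close> in auto)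
  also have "\<dots> = (\<Sum>y\<in>(\<lambda>x. a \<otimes> x) ` D. card K)"
  proof (rule sum.cong[OF refl])
    fix y assume "y \<in> (\<lambda>x. a \<otimes> x) ` D"
    then obtain x0 where x0: "x0 \<in> D" "y = a \<otimes> x0" by auto
    then have x0_carr: "x0 \<in> carrier R" using D by auto
    \<comment> \<open>each fibre is a translate of the annihilator\<close>
    have "bij_betw (\<lambda>k. x0 \<oplus> k) K {x\<in>D. a \<otimes> x = y}"
    proof (rule bij_betw_byWitness[where f'="\<lambda>x. \<ominus> x0 \<oplus> x"])
      show "\<forall>k\<in>K. \<ominus> x0 \<oplus> (x0 \<oplus> k) = k"
        unfolding K_def using x0_carr by (auto simp: a_assoc[symmetric] l_neg)
      show "\<forall>x\<in>{x\<in>D. a \<otimes> x = y}. x0 \<oplus> (\<ominus> x0 \<oplus> x) = x"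
        using x0_carr D by (auto simp: a_assoc[symmetric] r_neg)
      show "(\<lambda>k. x0 \<oplus> k) ` K \<subseteq> {x\<in>D. a \<otimes> x = y}"
        using x0 x0_carr a ann_D D_add unfolding K_def by (auto simp: r_distr)
      show "(\<lambda>x. \<ominus> x0 \<oplus> x) ` {x\<in>D. a \<otimes> x = y} \<subseteq> K"
      proof
        fix w assume "w \<in> (\<lambda>x. \<ominus> x0 \<oplus> x) ` {x\<in>D. a \<otimes> x = y}"
        then obtain x where x: "x \<in> D" "a \<otimes> x = a \<otimes> x0" "w = \<ominus> x0 \<oplus> x"
          using x0 by auto
        then have "x \<in> carrier R"
          using D by auto
        have "a \<otimes> w = \<ominus> (a \<otimes> x0) \<oplus> a \<otimes> x"
          using x \<open>x \<in> carrier R\<close> x0_carr a by (simp add: r_distr r_minus)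
        then show "w \<in> K"
          unfolding K_def using x \<open>x \<in> carrier R\<close> x0_carr a by (simp add: l_neg)
      qed
    qed
    then show "card {x\<in>D. a \<otimes> x = y} = card K"
      by (simp add: bij_betw_same_card)
  qed
  finally show ?thesis
    unfolding K_def by simp
qed

lemma card_power_ideal_eq_mult:
  assumes fin: "finite (carrier R)" and z: "z \<in> carrier R"
    and nonunits: "nonunits R = PIdl z" and zi: "z [^] (i::nat) \<noteq> \<zero>"
  shows "card ((\<lambda>x. z [^] i \<otimes> x) ` carrier R)
       = card (a_rcosets (PIdl z)) * card ((\<lambda>x. z [^] Suc i \<otimes> x) ` carrier R)"
proof -
  define K where "K = {x \<in> carrier R. z [^] i \<otimes> x = \<zero>}"
  define q where "q = card (a_rcosets (PIdl z))"
  have M: "ideal (PIdl z) R"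
    using z by (rule cgenideal_ideal)
  then have M_carr: "PIdl z \<subseteq> carrier R"
    by (simp add: ideal.Icarr subsetI)
  have K_M: "K \<subseteq> PIdl z"
  proof
    fix x assume "x \<in> K"
    then have x: "x \<in> carrier R" "z [^] i \<otimes> x = \<zero>"
      unfolding K_def by auto
    have "x \<notin> Units R"
    proof
      assume "x \<in> Units R"
      then have "z [^] i = (z [^] i \<otimes> x) \<otimes> inv x"
        using z x(1) by (simp add: m_assoc)
      also have "\<dots> = \<zero>"
        using x \<open>x \<in> Units R\<close> by simp
      finally show False
        using zi by simp
    qed
    then show "x \<in> PIdl z"
      using x nonunits unfolding nonunits_def by auto
  qed
  \<comment> \<open>multiplication by \<open>z\<^sup>i\<close> has the same kernel \<open>K\<close> on \<open>R\<close> and on \<open>(z)\<close>\<close>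
  have R_fibres: "card (carrier R) = card ((\<lambda>x. z [^] i \<otimes> x) ` carrier R) * card K"
    using z K_M M_carr unfolding K_def
    by (intro card_eq_card_mult_image_mult_card_ann[OF fin]) auto
  have M_fibres: "card (PIdl z) = card ((\<lambda>x. z [^] i \<otimes> x) ` (PIdl z)) * card K"
    using z K_M M_carr ideal.axioms(1)[OF M] unfolding K_def
    by (intro card_eq_card_mult_image_mult_card_ann[OF fin]) (auto simp: additive_subgroup.a_closed)
  have "(\<lambda>x. z [^] i \<otimes> x) ` (PIdl z) = (\<lambda>x. z [^] Suc i \<otimes> x) ` carrier R"
  proof -
    have "z [^] Suc i \<otimes> y = z [^] i \<otimes> (y \<otimes> z)" if "y \<in> carrier R" for y
      using z that by (simp add: m_assoc m_comm[of y z])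
    then show ?thesis
      unfolding cgenideal_def image_def by auto
  qed
  moreover have "q * card (PIdl z) = card (carrier R)"
    unfolding q_def using a_lagrange[OF fin ideal.axioms(1)[OF M]] by (simp add: Coset.order_def)
  ultimately have "q * card ((\<lambda>x. z [^] Suc i \<otimes> x) ` carrier R) * card K
      = card ((\<lambda>x. z [^] i \<otimes> x) ` carrier R) * card K"
    using R_fibres M_fibres by (simp add: mult.assoc)
  moreover have "card K > 0"
    unfolding K_def using fin z by (auto simp: card_gt_0_iff intro!: exI[of _ \<zero>])
  ultimately show ?thesis
    unfolding q_def by simp
qed

lemma card_power_ideal:
  assumes fin: "finite (carrier R)" and z: "z \<in> carrier R"
    and nonunits: "nonunits R = PIdl z"
    and zr: "z [^] (r::nat) = \<zero>" and znz: "\<forall>n<r. z [^] n \<noteq> \<zero>" and "i \<le> r"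
  shows "card ((\<lambda>x. z [^] i \<otimes> x) ` carrier R) = card (a_rcosets (PIdl z)) ^ (r - i)"
  using \<open>i \<le> r\<close>
proof (induction i rule: inc_induct)
  case base
  have "(\<lambda>x. z [^] r \<otimes> x) ` carrier R = {\<zero>}"
    using zr by auto
  then show ?case by simp
next
  case (step n)
  then have "r - n = Suc (r - Suc n)"
    by simp
  with step show ?case
    using card_power_ideal_eq_mult[OF fin z nonunits] znz by simp
qed

lemma card_carrier_eq_power:
  assumes fin: "finite (carrier R)" and z: "z \<in> carrier R"
    and nonunits: "nonunits R = PIdl z"
    and zr: "z [^] (r::nat) = \<zero>" and znz: "\<forall>n<r. z [^] n \<noteq> \<zero>"
  shows "card (carrier R) = card (a_rcosets (PIdl z)) ^ r"
  using card_power_ideal[OF assms, of 0] by simp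

lemma card_nonunits_eq_power:
  assumes fin: "finite (carrier R)" and z: "z \<in> carrier R"
    and nonunits: "nonunits R = PIdl z"
    and zr: "z [^] (r::nat) = \<zero>" and znz: "\<forall>n<r. z [^] n \<noteq> \<zero>"
  shows "r \<ge> 1" and "card (nonunits R) = card (a_rcosets (PIdl z)) ^ (r - 1)"
proof -
  have "\<zero> \<in> PIdl z"
    using additive_subgroup.zero_closed[OF ideal.axioms(1)[OF cgenideal_ideal[OF z]]] .
  then have "\<one> \<noteq> \<zero>"
    using nonunits unfolding nonunits_def by force
  then show "r \<ge> 1"
    using zr by (cases r) auto
  have "(\<lambda>x. z [^] (1::nat) \<otimes> x) ` carrier R = PIdl z"
    unfolding cgenideal_def using z by (auto simp: m_comm)
  then show "card (nonunits R) = card (a_rcosets (PIdl z)) ^ (r - 1)"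
    using card_power_ideal[OF assms, of 1] \<open>r \<ge> 1\<close> nonunits by simp
qed

end

definition on_line :: "('a, 'b) ring_scheme \<Rightarrow> 'a \<times> 'a \<Rightarrow> 'a \<times> 'a \<Rightarrow> bool" where
  "on_line R l p \<longleftrightarrow> snd p = fst l \<otimes>\<^bsub>R\<^esub> fst p \<oplus>\<^bsub>R\<^esub> snd l"

context cring
begin

lemma card_lines_through:
  assumes p: "p \<in> carrier R \<times> carrier R"
  shows "card {l \<in> carrier R \<times> carrier R. on_line R l p} = card (carrier R)"
proof -
  obtain x y where xy: "p = (x, y)" "x \<in> carrier R" "y \<in> carrier R"
    using p by auto
  have "bij_betw (\<lambda>m. (m, y \<ominus> m \<otimes> x)) (carrier R) {l \<in> carrier R \<times> carrier R. on_line R l p}"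
  proof (rule bij_betw_byWitness[where f'=fst])
    show "\<forall>l\<in>{l \<in> carrier R \<times> carrier R. on_line R l p}. (fst l, y \<ominus> fst l \<otimes> x) = l"
    proof
      fix l assume "l \<in> {l \<in> carrier R \<times> carrier R. on_line R l p}"
      then obtain m k where "l = (m, k)" "m \<in> carrier R" "k \<in> carrier R" "y = m \<otimes> x \<oplus> k"
        using xy unfolding on_line_def by auto
      moreover have "(m \<otimes> x \<oplus> k) \<ominus> m \<otimes> x = k"
        using calculation xy by algebra
      ultimately show "(fst l, y \<ominus> fst l \<otimes> x) = l"
        by simp
    qed
    show "(\<lambda>m. (m, y \<ominus> m \<otimes> x)) ` carrier R \<subseteq> {l \<in> carrier R \<times> carrier R. on_line R l p}"
    proof
      fix l assume "l \<in> (\<lambda>m. (m, y \<ominus> m \<otimes> x)) ` carrier R"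
      then obtain m where m: "m \<in> carrier R" "l = (m, y \<ominus> m \<otimes> x)"
        by auto
      moreover have "y = m \<otimes> x \<oplus> (y \<ominus> m \<otimes> x)"
        using m xy by algebra
      ultimately show "l \<in> {l \<in> carrier R \<times> carrier R. on_line R l p}"
        unfolding on_line_def using xy by simp
    qed
  qed auto
  then show ?thesis
    by (simp add: bij_betw_same_card)
qed

lemma card_common_lines_le:
  assumes fin: "finite (carrier R)"
    and x: "x \<in> carrier R" and y: "y \<in> carrier R" and u: "u \<in> carrier R" and v: "v \<in> carrier R"
  shows "card {l \<in> carrier R \<times> carrier R. on_line R l (x, y) \<and> on_line R l (u, v)}
    \<le> card {m \<in> carrier R. v \<ominus> y = m \<otimes> (u \<ominus> x)}"
proof (rule card_inj_on_le[where f=fst])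
  show "inj_on fst {l \<in> carrier R \<times> carrier R. on_line R l (x, y) \<and> on_line R l (u, v)}"
  proof (rule inj_onI)
    fix l l'
    assume "l \<in> {l \<in> carrier R \<times> carrier R. on_line R l (x, y) \<and> on_line R l (u, v)}"
      and "l' \<in> {l \<in> carrier R \<times> carrier R. on_line R l (x, y) \<and> on_line R l (u, v)}"
      and "fst l = fst l'"
    then have "fst l \<otimes> x \<oplus> snd l = fst l \<otimes> x \<oplus> snd l'"
      and "fst l \<in> carrier R" "snd l \<in> carrier R" "snd l' \<in> carrier R"
      unfolding on_line_def by auto
    then have "snd l = snd l'"
      using x by (simp add: add.left_cancel)
    then show "l = l'"
      using \<open>fst l = fst l'\<close> by (simp add: prod_eq_iff)
  qed
  show "fst ` {l \<in> carrier R \<times> carrier R. on_line R l (x, y) \<and> on_line R l (u, v)}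
      \<subseteq> {m \<in> carrier R. v \<ominus> y = m \<otimes> (u \<ominus> x)}"
  proof
    fix m assume "m \<in> fst ` {l \<in> carrier R \<times> carrier R. on_line R l (x, y) \<and> on_line R l (u, v)}"
    then obtain k where mk: "m \<in> carrier R" "k \<in> carrier R"
      and "on_line R (m, k) (x, y)" "on_line R (m, k) (u, v)"
      by auto
    then have "v \<ominus> y = (m \<otimes> u \<oplus> k) \<ominus> (m \<otimes> x \<oplus> k)"
      unfolding on_line_def by simp
    also have "\<dots> = m \<otimes> (u \<ominus> x)"
      using mk x u by algebra
    finally show "m \<in> {m \<in> carrier R. v \<ominus> y = m \<otimes> (u \<ominus> x)}"
      using mk by simp
  qed
  show "finite {m \<in> carrier R. v \<ominus> y = m \<otimes> (u \<ominus> x)}"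
    using fin by simp
qed

lemma card_unit_multiples_le_one:
  assumes "d \<in> Units R"
  shows "card {m \<in> carrier R. b = m \<otimes> d} \<le> 1"
proof -
  have "m = m \<otimes> d \<otimes> inv d" if "m \<in> carrier R" for m
    using assms that by (metis Units_closed Units_inv_closed Units_r_inv r_one m_assoc)
  then have "{m \<in> carrier R. b = m \<otimes> d} \<subseteq> {b \<otimes> inv d}"
    by auto
  then show ?thesis
    using card_mono[of "{b \<otimes> inv d}"] by fastforce
qed

lemma sum_card_common_lines_le:
  assumes fin: "finite (carrier R)" and P: "P \<subseteq> carrier R \<times> carrier R"
    and x: "x \<in> carrier R" and y: "y \<in> carrier R"
  shows "(\<Sum>p\<in>P. card {l \<in> carrier R \<times> carrier R. on_line R l (x, y) \<and> on_line R l p})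
     \<le> card P + card (nonunits R) * card (carrier R)"
proof -
  \<comment> \<open>common lines are only abundant for points whose abscissae differ by a non-unit\<close>
  define B where "B p = {m \<in> carrier R. fst p \<ominus> x \<notin> Units R \<and> snd p \<ominus> y = m \<otimes> (fst p \<ominus> x)}" for p
  have "finite P"
    using P fin by (meson finite_SigmaI finite_subset)
  have "card {l \<in> carrier R \<times> carrier R. on_line R l (x, y) \<and> on_line R l p}
      \<le> of_bool (fst p \<ominus> x \<in> Units R) + card (B p)" if "p \<in> P" for p
  proof -
    obtain u v where uv: "p = (u, v)" "u \<in> carrier R" "v \<in> carrier R"
      using P \<open>p \<in> P\<close> by auto
    have "card {l \<in> carrier R \<times> carrier R. on_line R l (x, y) \<and> on_line R l p}
        \<le> card {m \<in> carrier R. v \<ominus> y = m \<otimes> (u \<ominus> x)}"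
      using card_common_lines_le[OF fin x y uv(2,3)] uv(1) by simp
    also have "\<dots> \<le> of_bool (u \<ominus> x \<in> Units R) + card (B p)"
      using card_unit_multiples_le_one[of "u \<ominus> x" "v \<ominus> y"] uv unfolding B_def by auto
    finally show ?thesis
      using uv by simp
  qed
  then have "(\<Sum>p\<in>P. card {l \<in> carrier R \<times> carrier R. on_line R l (x, y) \<and> on_line R l p})
      \<le> (\<Sum>p\<in>P. of_bool (fst p \<ominus> x \<in> Units R)) + (\<Sum>p\<in>P. card (B p))"
    by (simp add: sum.distrib[symmetric] sum_mono)
  also have "(\<Sum>p\<in>P. of_bool (fst p \<ominus> x \<in> Units R)) \<le> card P"
    using sum_mono[of P "\<lambda>p. of_bool (fst p \<ominus> x \<in> Units R)" "\<lambda>_. 1::nat"] by simp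
  also have "(\<Sum>p\<in>P. card (B p)) = card (Sigma P B)"
    using \<open>finite P\<close> fin by (simp add: card_SigmaI B_def)
  also have "\<dots> \<le> card (nonunits R \<times> carrier R)"
  proof (rule card_inj_on_le[where f="\<lambda>(p, m). (fst p \<ominus> x, m)"])
    show "inj_on (\<lambda>(p, m). (fst p \<ominus> x, m)) (Sigma P B)"
    proof (rule inj_onI)
      fix pm pm' assume "pm \<in> Sigma P B" "pm' \<in> Sigma P B"
        and eq: "(\<lambda>(p, m). (fst p \<ominus> x, m)) pm = (\<lambda>(p, m). (fst p \<ominus> x, m)) pm'"
      obtain u v m u' v' m' where pm: "pm = ((u, v), m)" "pm' = ((u', v'), m')"
        by (metis prod.exhaust)
      then have uv: "u \<in> carrier R" "v \<in> carrier R" "u' \<in> carrier R" "v' \<in> carrier R"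
        "v \<ominus> y = m \<otimes> (u \<ominus> x)" "v' \<ominus> y = m' \<otimes> (u' \<ominus> x)" "u \<ominus> x = u' \<ominus> x" "m = m'"
        using P \<open>pm \<in> Sigma P B\<close> \<open>pm' \<in> Sigma P B\<close> eq unfolding B_def by auto
      have "u = u'"
        using uv x by (simp add: minus_eq add.right_cancel)
      moreover have "v \<ominus> y = v' \<ominus> y"
        using uv by simp
      then have "v = v'"
        using uv y by (simp add: minus_eq add.right_cancel)
      ultimately show "pm = pm'"
        using pm uv by simp
    qed
    show "(\<lambda>(p, m). (fst p \<ominus> x, m)) ` Sigma P B \<subseteq> nonunits R \<times> carrier R"
      using P x unfolding B_def nonunits_def by (auto simp: minus_eq)
    show "finite (nonunits R \<times> carrier R)"
      using fin unfolding nonunits_def by simp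
  qed
  also have "\<dots> = card (nonunits R) * card (carrier R)"
    by (simp add: card_cartesian_product)
  finally show ?thesis
    by simp
qed

lemma sum_incidences:
  assumes fin: "finite (carrier R)" and P: "P \<subseteq> carrier R \<times> carrier R"
  shows "(\<Sum>l\<in>carrier R \<times> carrier R. card {p\<in>P. on_line R l p}) = card (carrier R) * card P"
  using fin P card_lines_through
  by (intro sum_multicount) (auto intro: finite_subset)

lemma sum_incidences_squared_le:
  assumes fin: "finite (carrier R)" and P: "P \<subseteq> carrier R \<times> carrier R"
  shows "(\<Sum>l\<in>carrier R \<times> carrier R. (card {p\<in>P. on_line R l p})\<^sup>2)
    \<le> card P * (card P + card (nonunits R) * card (carrier R))"
proof -
  define common where "common p p' = {l \<in> carrier R \<times> carrier R. on_line R l p \<and> on_line R l p'}" for p p'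
  have "finite P"
    using P fin by (meson finite_SigmaI finite_subset)
  have "(card {p\<in>P. on_line R l p})\<^sup>2 = card {pp \<in> P \<times> P. on_line R l (fst pp) \<and> on_line R l (snd pp)}" for l
  proof -
    have "{pp \<in> P \<times> P. on_line R l (fst pp) \<and> on_line R l (snd pp)}
        = {p\<in>P. on_line R l p} \<times> {p\<in>P. on_line R l p}"
      by auto
    then show ?thesis
      by (simp add: card_cartesian_product power2_eq_square)
  qed
  then have "(\<Sum>l\<in>carrier R \<times> carrier R. (card {p\<in>P. on_line R l p})\<^sup>2)
      = (\<Sum>pp\<in>P \<times> P. card (common (fst pp) (snd pp)))"
    unfolding common_def using fin \<open>finite P\<close> by (simp add: sum_multicount_gen)
  also have "\<dots> = (\<Sum>p\<in>P. \<Sum>p'\<in>P. card (common p p'))"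
    by (simp only: sum.cartesian_product' fst_conv snd_conv)
  also have "\<dots> \<le> (\<Sum>p\<in>P. card P + card (nonunits R) * card (carrier R))"
  proof (rule sum_mono)
    fix p assume "p \<in> P"
    then obtain x y where "p = (x, y)" "x \<in> carrier R" "y \<in> carrier R"
      using P by auto
    then show "(\<Sum>p'\<in>P. card (common p p')) \<le> card P + card (nonunits R) * card (carrier R)"
      unfolding common_def using sum_card_common_lines_le[OF fin P] by simp
  qed
  finally show ?thesis
    by simp
qed

lemma incidence_bound:
  assumes fin: "finite (carrier R)" and P: "P \<subseteq> carrier R \<times> carrier R"
    and L: "L \<subseteq> carrier R \<times> carrier R"
  shows "real (\<Sum>l\<in>L. card {p\<in>P. on_line R l p})
    \<le> real (card P) * real (card L) / real (card (carrier R))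
       + sqrt (real (card L) * real (card P) * real (card (nonunits R)) * real (card (carrier R)))"
proof -
  define N where "N = real (card (carrier R))"
  define f where "f l = real (card {p\<in>P. on_line R l p})" for l
  define mu where "mu = real (card P) / N"
  define h where "h l = f l - mu" for l
  have "N > 0"
    unfolding N_def using fin card_gt_0_iff[of "carrier R"] by auto
  have card_lines: "real (card (carrier R \<times> carrier R)) = N * N"
    unfolding N_def by (simp add: card_cartesian_product)
  have sum_f: "(\<Sum>l\<in>carrier R \<times> carrier R. f l) = N * real (card P)"
    unfolding f_def N_def using arg_cong[OF sum_incidences[OF fin P], of real] by simp
  have "real (\<Sum>l\<in>carrier R \<times> carrier R. (card {p\<in>P. on_line R l p})^2)
      \<le> real (card P * (card P + card (nonunits R) * card (carrier R)))"
    using sum_incidences_squared_le[OF fin P] by (simp only: of_nat_le_iff)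
  then have sum_f_squared: "(\<Sum>l\<in>carrier R \<times> carrier R. (f l)^2)
      \<le> real (card P) * (real (card P) + real (card (nonunits R)) * N)"
    unfolding f_def N_def by simp
  have variance: "(\<Sum>l\<in>carrier R \<times> carrier R. (h l)^2) \<le> real (card P) * real (card (nonunits R)) * N"
  proof -
    have "(\<Sum>l\<in>carrier R \<times> carrier R. (h l)^2)
        = (\<Sum>l\<in>carrier R \<times> carrier R. (f l)^2) - 2 * mu * (\<Sum>l\<in>carrier R \<times> carrier R. f l)
          + real (card (carrier R \<times> carrier R)) * mu^2"
      unfolding h_def by (simp add: power2_diff sum.distrib sum_subtractf sum_distrib_left mult_ac)
    also have "\<dots> = (\<Sum>l\<in>carrier R \<times> carrier R. (f l)^2) - real (card P)^2"
      using \<open>N > 0\<close> unfolding sum_f card_lines mu_def by (simp add: field_simps power2_eq_square)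
    also have "\<dots> \<le> real (card P) * real (card (nonunits R)) * N"
      using sum_f_squared by (simp add: algebra_simps power2_eq_square)
    finally show ?thesis .
  qed
  have "(\<Sum>l\<in>L. h l)^2 \<le> (\<Sum>l\<in>L. (h l)^2) * real (card L)"
    by (rule sum_squared_le_sum_of_squares)
  also have "\<dots> \<le> (\<Sum>l\<in>carrier R \<times> carrier R. (h l)^2) * real (card L)"
    using L fin by (intro mult_right_mono sum_mono2) auto
  also have "\<dots> \<le> real (card L) * real (card P) * real (card (nonunits R)) * N"
    using mult_left_mono[OF variance, of "real (card L)"] by (simp add: mult_ac)
  finally have "(\<Sum>l\<in>L. h l) \<le> sqrt (real (card L) * real (card P) * real (card (nonunits R)) * N)"
    by (rule real_le_rsqrt)
  moreover have "(\<Sum>l\<in>L. f l) = (\<Sum>l\<in>L. h l) + real (card L) * mu"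
    unfolding h_def by (simp add: sum_subtractf)
  ultimately show ?thesis
    unfolding f_def N_def mu_def by (simp add: field_simps)
qed

lemma inj_on_prod_shift_lines:
  assumes A: "A \<subseteq> Units R" and A1: "\<And>a. a \<in> A \<Longrightarrow> a \<oplus> \<one> \<in> Units R"
  shows "inj_on (\<lambda>(b, c). (c \<otimes> inv (b \<oplus> \<one>), c)) (A \<times> A)"
proof (rule inj_onI)
  fix bc bc' assume "bc \<in> A \<times> A" "bc' \<in> A \<times> A"
    and "(\<lambda>(b, c). (c \<otimes> inv (b \<oplus> \<one>), c)) bc = (\<lambda>(b, c). (c \<otimes> inv (b \<oplus> \<one>), c)) bc'"
  then obtain b c b' where bc: "bc = (b, c)" "bc' = (b', c)" "b \<in> A" "c \<in> A" "b' \<in> A"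
    and eq: "c \<otimes> inv (b \<oplus> \<one>) = c \<otimes> inv (b' \<oplus> \<one>)"
    by auto
  have "inv (b \<oplus> \<one>) = inv (b' \<oplus> \<one>)"
    using eq A A1 bc by (simp add: subset_iff)
  then have "b \<oplus> \<one> = b' \<oplus> \<one>"
    using A1 bc by (metis Units_inv_inv)
  then have "b = b'"
    using A bc by (meson Units_closed add.right_cancel one_closed subsetD)
  then show "bc = bc'"
    using bc by simp
qed

lemma card_le_incidences_prod_shift_line:
  assumes fin: "finite (carrier R)" and A: "A \<subseteq> carrier R"
    and A1: "\<And>a. a \<in> A \<Longrightarrow> a \<oplus> \<one> \<in> Units R" and b: "b \<in> A" and c: "c \<in> A"
  shows "card A \<le> card {p \<in> prod_shift_set R A \<times> prod_shift_set R A.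
                          on_line R (c \<otimes> inv (b \<oplus> \<one>), c) p}"
proof (rule card_inj_on_le[where f="\<lambda>a. (a \<otimes> (b \<oplus> \<one>), c \<otimes> (a \<oplus> \<one>))"])
  have b1: "b \<oplus> \<one> \<in> Units R"
    using A1 b by simp
  show "inj_on (\<lambda>a. (a \<otimes> (b \<oplus> \<one>), c \<otimes> (a \<oplus> \<one>))) A"
  proof (rule inj_onI)
    fix a a' assume "a \<in> A" "a' \<in> A"
      and "(a \<otimes> (b \<oplus> \<one>), c \<otimes> (a \<oplus> \<one>)) = (a' \<otimes> (b \<oplus> \<one>), c \<otimes> (a' \<oplus> \<one>))"
    then have "a \<otimes> (b \<oplus> \<one>) = a' \<otimes> (b \<oplus> \<one>)"
      by simp
    then have "(b \<oplus> \<one>) \<otimes> a = (b \<oplus> \<one>) \<otimes> a'"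
      using A b1 \<open>a \<in> A\<close> \<open>a' \<in> A\<close> by (simp add: m_comm[of a] m_comm[of a'] Units_closed subset_iff)
    then show "a = a'"
      using A b1 \<open>a \<in> A\<close> \<open>a' \<in> A\<close> by (simp add: subset_iff)
  qed
  show "(\<lambda>a. (a \<otimes> (b \<oplus> \<one>), c \<otimes> (a \<oplus> \<one>))) ` A
      \<subseteq> {p \<in> prod_shift_set R A \<times> prod_shift_set R A. on_line R (c \<otimes> inv (b \<oplus> \<one>), c) p}"
  proof
    fix p assume "p \<in> (\<lambda>a. (a \<otimes> (b \<oplus> \<one>), c \<otimes> (a \<oplus> \<one>))) ` A"
    then obtain a where "a \<in> A" and p: "p = (a \<otimes> (b \<oplus> \<one>), c \<otimes> (a \<oplus> \<one>))"
      by auto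
    then have ac: "a \<in> carrier R" "b \<in> carrier R" "c \<in> carrier R"
      using A b c by auto
    have "c \<otimes> inv (b \<oplus> \<one>) \<otimes> (a \<otimes> (b \<oplus> \<one>)) \<oplus> c
        = c \<otimes> a \<otimes> (inv (b \<oplus> \<one>) \<otimes> (b \<oplus> \<one>)) \<oplus> c"
      using ac b1 by (simp add: m_ac)
    also have "\<dots> = c \<otimes> a \<oplus> c"
      using ac b1 by simp
    also have "\<dots> = c \<otimes> (a \<oplus> \<one>)"
      using ac by (simp add: r_distr)
    finally have "on_line R (c \<otimes> inv (b \<oplus> \<one>), c) (a \<otimes> (b \<oplus> \<one>), c \<otimes> (a \<oplus> \<one>))"
      unfolding on_line_def by simp
    moreover have "a \<otimes> (b \<oplus> \<one>) \<in> prod_shift_set R A" "c \<otimes> (a \<oplus> \<one>) \<in> prod_shift_set R A"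
      unfolding prod_shift_set_def using \<open>a \<in> A\<close> b c by auto
    ultimately show "p \<in> {p \<in> prod_shift_set R A \<times> prod_shift_set R A.
                              on_line R (c \<otimes> inv (b \<oplus> \<one>), c) p}"
      unfolding p by simp
  qed
  have "prod_shift_set R A \<subseteq> carrier R"
    unfolding prod_shift_set_def using A by auto
  then show "finite {p \<in> prod_shift_set R A \<times> prod_shift_set R A. on_line R (c \<otimes> inv (b \<oplus> \<one>), c) p}"
    using fin by (simp add: finite_subset)
qed

lemma prod_shift_set_cube_bound:
  assumes fin: "finite (carrier R)" and A: "A \<subseteq> Units R"
    and A1: "\<And>a. a \<in> A \<Longrightarrow> a \<oplus> \<one> \<in> Units R"
  shows "real (card A) ^ 3
    \<le> real (card (prod_shift_set R A))^2 * real (card A)^2 / real (card (carrier R))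
       + real (card A) * real (card (prod_shift_set R A))
         * sqrt (real (card (nonunits R)) * real (card (carrier R)))"
proof -
  define S where "S = prod_shift_set R A"
  define line where "line = (\<lambda>(b, c). (c \<otimes> inv (b \<oplus> \<one>), c))"
  define L where "L = line ` (A \<times> A)"
  have A_carr: "A \<subseteq> carrier R"
    using A Units_closed by blast
  have S_carr: "S \<subseteq> carrier R"
    unfolding S_def prod_shift_set_def using A_carr by auto
  have L_carr: "L \<subseteq> carrier R \<times> carrier R"
    unfolding L_def line_def using A A1 by (auto simp: subset_iff)
  have card_L: "card L = card A ^ 2"
    unfolding L_def line_def using card_image[OF inj_on_prod_shift_lines[OF A A1]]
    by (simp add: card_cartesian_product power2_eq_square)
  have "card (A \<times> A) * card A = (\<Sum>bc\<in>A \<times> A. card A)"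
    by simp
  also have "\<dots> \<le> (\<Sum>bc\<in>A \<times> A. card {p \<in> S \<times> S. on_line R (line bc) p})"
    using card_le_incidences_prod_shift_line[OF fin A_carr A1]
    unfolding S_def line_def by (intro sum_mono) auto
  also have "\<dots> = (\<Sum>l\<in>L. card {p \<in> S \<times> S. on_line R l p})"
    unfolding L_def line_def
    by (simp add: sum.reindex[OF inj_on_prod_shift_lines[OF A A1]] comp_def)
  finally have incidences_ge: "card A ^ 3 \<le> (\<Sum>l\<in>L. card {p \<in> S \<times> S. on_line R l p})"
    by (simp add: card_cartesian_product power3_eq_cube)
  have "real (card A) ^ 3 \<le> real (\<Sum>l\<in>L. card {p \<in> S \<times> S. on_line R l p})"
    using of_nat_mono[OF incidences_ge, where 'a=real] by simp
  also have "\<dots> \<le> real (card (S \<times> S)) * real (card L) / real (card (carrier R))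
       + sqrt (real (card L) * real (card (S \<times> S)) * real (card (nonunits R)) * real (card (carrier R)))"
    using S_carr by (intro incidence_bound[OF fin _ L_carr]) auto
  also have "\<dots> = real (card S)^2 * real (card A)^2 / real (card (carrier R))
       + real (card A) * real (card S) * sqrt (real (card (nonunits R)) * real (card (carrier R)))"
    by (simp add: card_L card_cartesian_product real_sqrt_mult power2_eq_square)
  finally show ?thesis
    unfolding S_def .
qed

end

lemma prod_shift_set_lower_bound:
  fixes R :: "('a, 'b) ring_scheme" (structure)
  assumes R: "finite_valuation_ring R"
    and z: "z \<in> carrier R" and z_max: "maximalideal (Idl\<^bsub>R\<^esub> {z}) R"
    and q: "q = card (carrier (R Quot (Idl\<^bsub>R\<^esub> {z})))"
    and zr: "z [^]\<^bsub>R\<^esub> (r::nat) = \<zero>\<^bsub>R\<^esub>" and znz: "\<forall>n<r. z [^]\<^bsub>R\<^esub> n \<noteq> \<zero>\<^bsub>R\<^esub>"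
    and A: "A \<subseteq> Units R" and A1: "\<And>a. a \<in> A \<Longrightarrow> a \<oplus>\<^bsub>R\<^esub> \<one>\<^bsub>R\<^esub> \<in> Units R"
  shows "1/2 * min (sqrt (real q ^ r * real (card A))) (real (card A)^2 / sqrt (real q ^ (2 * r - 1)))
    \<le> real (card (prod_shift_set R A))"
proof -
  interpret cring R
    using R unfolding finite_valuation_ring_def by simp
  have fin: "finite (carrier R)"
    using R unfolding finite_valuation_ring_def by simp
  have PIdl_z: "PIdl z = Idl {z}"
    using z by (rule cgenideal_eq_genideal)
  have "nonunits R = PIdl z"
    using R z_max unfolding PIdl_z finite_valuation_ring_def
    by (intro nonunits_eq_maximalideal) auto
  note counts = card_carrier_eq_power[OF fin z this zr znz] card_nonunits_eq_power[OF fin z this zr znz]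
  have q_cosets: "q = card (a_rcosets (PIdl z))"
    unfolding q PIdl_z by (simp add: FactRing_def)
  have "card (carrier R) > 0"
    using fin by (auto simp: card_gt_0_iff)
  then have "q > 0"
    using counts q_cosets by (cases q) auto
  have "r - 1 + r = 2 * r - 1"
    using \<open>r \<ge> 1\<close> by simp
  then have "real (card (nonunits R)) * real (card (carrier R)) = real q ^ (2 * r - 1)"
    using counts q_cosets by (metis of_nat_mult of_nat_power power_add)
  then show ?thesis
    using prod_shift_set_cube_bound[OF fin A A1] counts(1) \<open>q > 0\<close> q_cosets
    by (intro min_sqrt_le_of_cube_le) auto
qed

theorem corollary1p11:
  "\<forall>r::nat. \<exists>c::real. c > 0 \<and>
     (\<forall>(R :: 'a ring) (z :: 'a) (q :: nat) (A :: 'a set).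
        finite_valuation_ring R \<and>
        z \<in> carrier R \<and> maximalideal (Idl\<^bsub>R\<^esub> {z}) R \<and>
        q = card (carrier (R Quot (Idl\<^bsub>R\<^esub> {z}))) \<and>
        z [^]\<^bsub>R\<^esub> r = \<zero>\<^bsub>R\<^esub> \<and> (\<forall>n<r. z [^]\<^bsub>R\<^esub> n \<noteq> \<zero>\<^bsub>R\<^esub>) \<and>
        A \<subseteq> carrier R \<and>
        A \<inter> nonunits R = {} \<and>
        A \<inter> {t \<ominus>\<^bsub>R\<^esub> \<one>\<^bsub>R\<^esub> | t. t \<in> nonunits R} = {}
        \<longrightarrow>
        real (card (prod_shift_set R A)) \<ge>
          c * min (sqrt (real q ^ r * real (card A)))
                  (real (card A) ^ 2 / sqrt (real q ^ (2 * r - 1))))"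
proof ((intro allI exI[where x = "1/2"] conjI impI; (elim conjE)?), goal_cases)
  case 1
  show ?case by simp
next
  case (2 r R z q A)
  interpret cring R
    using 2(1) unfolding finite_valuation_ring_def by simp
  have "A \<subseteq> Units R"
    using 2(7,8) unfolding nonunits_def by auto
  moreover have "a \<oplus>\<^bsub>R\<^esub> \<one>\<^bsub>R\<^esub> \<in> Units R" if "a \<in> A" for a
  proof (rule ccontr)
    assume "a \<oplus>\<^bsub>R\<^esub> \<one>\<^bsub>R\<^esub> \<notin> Units R"
    moreover have "a = (a \<oplus>\<^bsub>R\<^esub> \<one>\<^bsub>R\<^esub>) \<ominus>\<^bsub>R\<^esub> \<one>\<^bsub>R\<^esub>"
      using subsetD[OF 2(7) \<open>a \<in> A\<close>] by algebra
    ultimately show False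
      using 2(7,9) \<open>a \<in> A\<close> unfolding nonunits_def by blast
  qed
  ultimately show ?case
    using prod_shift_set_lower_bound[OF 2(1-6)] by simp
qed

end
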